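(* Let $\gamma\in(0,1)$ and let $\alpha_0,\alpha_1,\dots\in[0,1]$. Define $\delta^1=\alpha_0$, $\lambda^1=\alpha_0^2$ and, for $n>1$, $$\delta^n=\alpha_{n-1}+\big(1-(1-\gamma)\alpha_{n-1}\big)\delta^{n-1},\qquad \lambda^n=\alpha_{n-1}^2+\big(1-(1-\gamma)\alpha_{n-1}\big)^2\lambda^{n-1}.$$ Then for all $n\ge1$, $\delta^n\le \frac{1}{1-\gamma}$ and $\lambda^n\le\frac{1}{\gamma(1-\gamma)}$. *)

theory Defs
  imports Complex_Main
begin

(* delta_aux g a m = \<delta>^(m+1), lambda_aux g a m = \<lambda>^(m+1) *)
primrec delta_aux :: "real \<Rightarrow> (nat \<Rightarrow> real) \<Rightarrow> nat \<Rightarrow> real" where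
  "delta_aux g a 0 = a 0"
| "delta_aux g a (Suc m) = a (Suc m) + (1 - (1 - g) * a (Suc m)) * delta_aux g a m"

primrec lambda_aux :: "real \<Rightarrow> (nat \<Rightarrow> real) \<Rightarrow> nat \<Rightarrow> real" where
  "lambda_aux g a 0 = (a 0)\<^sup>2"
| "lambda_aux g a (Suc m) = (a (Suc m))\<^sup>2 + (1 - (1 - g) * a (Suc m))\<^sup>2 * lambda_aux g a m"

definition delta :: "real \<Rightarrow> (nat \<Rightarrow> real) \<Rightarrow> nat \<Rightarrow> real" where
  "delta g a n = delta_aux g a (n - 1)"

definition lambda :: "real \<Rightarrow> (nat \<Rightarrow> real) \<Rightarrow> nat \<Rightarrow> real" where
  "lambda g a n = lambda_aux g a (n - 1)"

end

theory Submission
  imports Defs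
begin

(* Both bounds are invariant under the respective recursion step: if \<delta> \<le> 1/(1-\<gamma>) then
   a + (1 - (1-\<gamma>)a) \<delta> \<le> a + (1 - (1-\<gamma>)a)/(1-\<gamma>) = 1/(1-\<gamma>), and for \<lambda> the bound
   B = 1/(\<gamma>(1-\<gamma>)) is preserved because a\<^sup>2 + (1-(1-\<gamma>)a)\<^sup>2 B - B = (1-\<gamma>) a (a-2) B \<le> 0
   for a \<in> [0,1]. The first terms \<alpha>\<^sub>0 and \<alpha>\<^sub>0\<^sup>2 are at most 1, which lies below both bounds. *)

lemma affine_step_le_inverse:
  fixes c a d :: real
  assumes "0 < c" "0 \<le> a" "c * a \<le> 1" "d \<le> 1 / c"
  shows "a + (1 - c * a) * d \<le> 1 / c"
proof -
  have "(1 - c * a) * d \<le> (1 - c * a) * (1 / c)"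
    using assms(3,4) by (intro mult_left_mono) auto
  also have "\<dots> = 1 / c - a"
    using assms(1) by (simp add: field_simps)
  finally show ?thesis by simp
qed

lemma quadratic_step_le:
  fixes g a l :: real
  assumes "0 < g" "g < 1" "0 \<le> a" "a \<le> 1" "l \<le> 1 / (g * (1 - g))"
  shows "a\<^sup>2 + (1 - (1 - g) * a)\<^sup>2 * l \<le> 1 / (g * (1 - g))"
proof -
  have pos: "0 < g * (1 - g)" using assms(1,2) by simp
  have key: "a\<^sup>2 * (g * (1 - g)) + (1 - (1 - g) * a)\<^sup>2 \<le> 1"
  proof -
    have "a\<^sup>2 * (g * (1 - g)) + (1 - (1 - g) * a)\<^sup>2 - 1 = (1 - g) * a * (a - 2)"
      by (simp add: algebra_simps power2_eq_square)
    also have "\<dots> \<le> 0" using assms(2-4) by (simp add: mult_nonneg_nonpos)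
    finally show ?thesis by simp
  qed
  have "(1 - (1 - g) * a)\<^sup>2 * l \<le> (1 - (1 - g) * a)\<^sup>2 * (1 / (g * (1 - g)))"
    using assms(5) by (intro mult_left_mono) auto
  also have "a\<^sup>2 + \<dots> = (a\<^sup>2 * (g * (1 - g)) + (1 - (1 - g) * a)\<^sup>2) / (g * (1 - g))"
    using pos by (simp add: add_divide_distrib del: mult_eq_0_iff)
  also have "\<dots> \<le> 1 / (g * (1 - g))"
    using key pos by (simp add: divide_right_mono)
  finally show ?thesis by simp
qed

lemma delta_aux_le:
  assumes "0 \<le> g" "g < 1" and \<alpha>: "\<And>k. 0 \<le> a k \<and> a k \<le> 1"
  shows "delta_aux g a m \<le> 1 / (1 - g)"
proof (induction m)
  case 0
  have "a 0 \<le> 1" using \<alpha> by simp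
  also have "1 \<le> 1 / (1 - g)" using assms(1,2) by (simp add: field_simps)
  finally show ?case by simp
next
  case (Suc m)
  have "(1 - g) * a (Suc m) \<le> 1"
    using \<alpha>[of "Suc m"] assms(1,2) by (simp add: mult_le_one)
  then show ?case
    using Suc affine_step_le_inverse[of "1 - g" "a (Suc m)"] \<alpha> assms(2) by simp
qed

lemma lambda_aux_le:
  assumes "0 < g" "g < 1" and \<alpha>: "\<And>k. 0 \<le> a k \<and> a k \<le> 1"
  shows "lambda_aux g a m \<le> 1 / (g * (1 - g))"
proof (induction m)
  case 0
  have "(a 0)\<^sup>2 \<le> 1" using \<alpha> by (simp add: power_le_one)
  also have "1 \<le> 1 / (g * (1 - g))"
    using assms(1,2) mult_le_one[of g "1 - g"] by (simp add: field_simps)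
  finally show ?case by simp
next
  case (Suc m)
  then show ?case using quadratic_step_le[OF assms(1,2)] \<alpha> by simp
qed

theorem proposition2:
  fixes \<gamma> :: real and \<alpha> :: "nat \<Rightarrow> real"
  assumes "0 < \<gamma>" "\<gamma> < 1"
    and "\<And>k. 0 \<le> \<alpha> k \<and> \<alpha> k \<le> 1"
  shows "\<forall>n\<ge>1. delta \<gamma> \<alpha> n \<le> 1 / (1 - \<gamma>) \<and> lambda \<gamma> \<alpha> n \<le> 1 / (\<gamma> * (1 - \<gamma>))"
  using delta_aux_le[of \<gamma> \<alpha>] lambda_aux_le[OF assms] assms
  by (simp add: delta_def lambda_def)

end
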